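(* Let $k\ge1$ and $\ell\ge1$. Then $$|\{n\in A_{2k}:\max\mathcal{CG}(n)=\max\mathcal{CG}_1(n)=F_{2k+2\ell}\}|=F_{2\ell+1},$$ $$|\{n\in A_{2k}:\max\mathcal{CG}(n)=\max\mathcal{CG}_2(n)=F_{2k+2\ell}\}|=F_{2\ell}.$$
   Context: Fibonacci numbers: $F_1=F_2=1$, $F_{n+1}=F_n+F_{n-1}$ for $n\ge2$. Chung–Graham decomposition: every positive integer $n$ has a unique representation $n=\sum_{i\ge1}c_iF_{2i}$ with $c_i\in\{0,1,2\}$, only finitely many nonzero, such that whenever $c_i=c_j=2$ with $i<j$ there is $k$ with $i<k<j$ and $c_k=0$. Let $\mathcal{CG}(n)$ be the set of $F_{2i}$ with $c_i\neq0$, $\mathcal{CG}_1(n)$ the set of $F_{2i}$ with $c_i=1$, and $\mathcal{CG}_2(n)$ the set of $F_{2i}$ with $c_i=2$. For $k\ge1$, $A_{2k}=\{n\ge1:\min\mathcal{CG}(n)=F_{2k}\}$. *)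

theory Defs
  imports "HOL-Number_Theory.Fib"
begin

text \<open>Coefficient sequences c :: nat => nat, index i >= 1 standing for F_{2i};
  c 0 = 0 is forced (index 0 unused).\<close>
definition cg_valid :: "(nat \<Rightarrow> nat) \<Rightarrow> bool" where
  "cg_valid c \<longleftrightarrow> c 0 = 0 \<and> (\<forall>i. c i \<le> 2) \<and> finite {i. c i \<noteq> 0} \<and>
     (\<forall>i j. i < j \<and> c i = 2 \<and> c j = 2 \<longrightarrow> (\<exists>k. i < k \<and> k < j \<and> c k = 0))"

definition cg_val :: "(nat \<Rightarrow> nat) \<Rightarrow> nat" where
  "cg_val c = (\<Sum>i\<in>{i. c i \<noteq> 0}. c i * fib (2 * i))"

definition cg_coeffs :: "nat \<Rightarrow> nat \<Rightarrow> nat" where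
  "cg_coeffs n = (THE c. cg_valid c \<and> cg_val c = n)"

definition CG :: "nat \<Rightarrow> nat set" where
  "CG n = {fib (2 * i) | i. i \<ge> 1 \<and> cg_coeffs n i \<noteq> 0}"

definition CG1 :: "nat \<Rightarrow> nat set" where
  "CG1 n = {fib (2 * i) | i. i \<ge> 1 \<and> cg_coeffs n i = 1}"

definition CG2 :: "nat \<Rightarrow> nat set" where
  "CG2 n = {fib (2 * i) | i. i \<ge> 1 \<and> cg_coeffs n i = 2}"

text \<open>A k stands for the paper's A_{2k}.\<close>
definition A :: "nat \<Rightarrow> nat set" where
  "A k = {n. n \<ge> 1 \<and> Min (CG n) = fib (2 * k)}"

end

theory Submission
  imports Defs
begin

text \<open>A valid coefficient sequence supported on \<open>{a..m+1}\<close> ends in 0, or ends in 1 after an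
  arbitrary sequence on \<open>{a..m}\<close>, or ends in 2 after a sequence on \<open>{a..m}\<close> whose last 2
  is already followed by a 0 (an open sequence). On an interval of length \<open>j\<close> this recursion
  gives \<open>F(2j+2)\<close> sequences, \<open>F(2j+1)\<close> of them open. For \<open>a = 1\<close> all values lie
  below \<open>F(2m+2)\<close> and the value map is injective (the top coefficient is a quotient by
  \<open>F(2m)\<close>), so counting gives existence and uniqueness of the representation. The numbers
  in the corollary are the values of sequences on \<open>{k..k+l}\<close> with nonzero coefficient at
  \<open>k\<close> and coefficient \<open>d\<close> at \<open>k+l\<close>: the sequences on \<open>{k..k+l}\<close> ending in \<open>d\<close> minus
  those on \<open>{k+1..k+l}\<close> ending in \<open>d\<close>, that is \<open>F(2l+2) - F(2l) = F(2l+1)\<close> for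
  \<open>d = 1\<close> and \<open>F(2l+1) - F(2l-1) = F(2l)\<close> for \<open>d = 2\<close>.\<close>

definition cg_seqs :: "nat \<Rightarrow> nat \<Rightarrow> (nat \<Rightarrow> nat) set" where
  "cg_seqs a m = {c. cg_valid c \<and> (\<forall>i. c i \<noteq> 0 \<longrightarrow> a \<le> i \<and> i \<le> m)}"

text \<open>The sequences in \<^term>\<open>cg_seqs a m\<close> that stay valid when the coefficient at
  \<^term>\<open>Suc m\<close> is set to 2.\<close>
definition cg_seqs_open :: "nat \<Rightarrow> nat \<Rightarrow> (nat \<Rightarrow> nat) set" where
  "cg_seqs_open a m = {c \<in> cg_seqs a m. \<forall>i. c i = 2 \<longrightarrow> (\<exists>k. i < k \<and> k \<le> m \<and> c k = 0)}"

lemma cg_validI: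
  assumes "c 0 = 0" "\<And>i. c i \<le> 2" "finite {i. c i \<noteq> 0}"
    and "\<And>i j. i < j \<Longrightarrow> c i = 2 \<Longrightarrow> c j = 2 \<Longrightarrow> \<exists>k. i < k \<and> k < j \<and> c k = 0"
  shows "cg_valid c"
  using assms unfolding cg_valid_def by blast

lemma cg_valid_gap:
  assumes "cg_valid c" "i < j" "c i = 2" "c j = 2"
  obtains k where "i < k" "k < j" "c k = 0"
  using assms unfolding cg_valid_def by blast

lemma cg_seqs_valid: "c \<in> cg_seqs a m \<Longrightarrow> cg_valid c"
  by (simp add: cg_seqs_def)

lemma cg_seqs_support: "c \<in> cg_seqs a m \<Longrightarrow> c i \<noteq> 0 \<Longrightarrow> a \<le> i \<and> i \<le> m"
  by (simp add: cg_seqs_def)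

lemma cg_seqs_above: "c \<in> cg_seqs a m \<Longrightarrow> m < i \<Longrightarrow> c i = 0"
  using cg_seqs_support[of c a m i] by fastforce

lemma cg_seqs_le_2: "c \<in> cg_seqs a m \<Longrightarrow> c i \<le> 2"
  by (simp add: cg_seqs_def cg_valid_def)

lemma cg_seqs_open_subset: "cg_seqs_open a m \<subseteq> cg_seqs a m"
  by (auto simp: cg_seqs_open_def)

lemma cg_valid_fun_upd_0:
  assumes "cg_valid c"
  shows "cg_valid (c(j := 0))"
proof (rule cg_validI)
  show "finite {i. (c(j := 0)) i \<noteq> 0}"
    by (rule finite_subset[of _ "{i. c i \<noteq> 0}"]) (use assms in \<open>auto simp: cg_valid_def\<close>)
  fix i i' assume "i < i'" "(c(j := 0)) i = 2" "(c(j := 0)) i' = 2"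
  then have "c i = 2" "c i' = 2" by (auto split: if_splits)
  then obtain k where "i < k" "k < i'" "c k = 0"
    using cg_valid_gap[OF assms \<open>i < i'\<close>] by blast
  then show "\<exists>k. i < k \<and> k < i' \<and> (c(j := 0)) k = 0" by (intro exI[of _ k]) simp
qed (use assms in \<open>simp_all add: cg_valid_def\<close>)

lemma cg_seqs_fun_upd_0: "c \<in> cg_seqs a (Suc m) \<Longrightarrow> c(Suc m := 0) \<in> cg_seqs a m"
proof -
  assume c: "c \<in> cg_seqs a (Suc m)"
  have "a \<le> i \<and> i \<le> m" if "(c(Suc m := 0)) i \<noteq> 0" for i
    using that cg_seqs_support[OF c, of i] by (cases "i = Suc m") auto
  with cg_valid_fun_upd_0[OF cg_seqs_valid[OF c]] show ?thesis by (simp add: cg_seqs_def)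
qed

lemma cg_seqs_open_fun_upd_0_of_2:
  assumes "c \<in> cg_seqs a (Suc m)" and "c (Suc m) = 2"
  shows "c(Suc m := 0) \<in> cg_seqs_open a m"
proof -
  have "\<exists>k. i < k \<and> k \<le> m \<and> (c(Suc m := 0)) k = 0" if "(c(Suc m := 0)) i = 2" for i
  proof -
    have "i \<noteq> Suc m" "c i = 2" using that by (auto split: if_splits)
    with cg_seqs_support[OF assms(1), of i] have "i < Suc m" by simp
    then obtain k where "i < k" "k < Suc m" "c k = 0"
      using cg_valid_gap[OF cg_seqs_valid[OF assms(1)] _ \<open>c i = 2\<close> assms(2)] by blast
    then show ?thesis by (intro exI[of _ k]) simp
  qed
  with cg_seqs_fun_upd_0[OF assms(1)] show ?thesis unfolding cg_seqs_open_def by blast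
qed

lemma cg_seqs_open_fun_upd_0_of_1:
  assumes "c \<in> cg_seqs_open a (Suc m)" and "c (Suc m) = 1"
  shows "c(Suc m := 0) \<in> cg_seqs_open a m"
proof -
  have "\<exists>k. i < k \<and> k \<le> m \<and> (c(Suc m := 0)) k = 0" if "(c(Suc m := 0)) i = 2" for i
  proof -
    have "c i = 2" using that by (auto split: if_splits)
    then obtain k where "i < k" "k \<le> Suc m" "c k = 0"
      using assms(1) unfolding cg_seqs_open_def by blast
    with assms(2) show ?thesis by (intro exI[of _ k]) (auto simp: le_Suc_eq)
  qed
  with cg_seqs_fun_upd_0 assms(1) cg_seqs_open_subset show ?thesis
    unfolding cg_seqs_open_def by blast
qed

lemma cg_seqs_fun_upd:
  assumes c: "c \<in> cg_seqs a m" and "a \<le> Suc m" "d \<le> 2"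
    and open_if_2: "d = 2 \<Longrightarrow> c \<in> cg_seqs_open a m"
  shows "c(Suc m := d) \<in> cg_seqs a (Suc m)"
proof -
  have v: "cg_valid c" using c by (rule cg_seqs_valid)
  have gap: "\<exists>k. i < k \<and> k < j \<and> (c(Suc m := d)) k = 0"
    if "i < j" "(c(Suc m := d)) i = 2" "(c(Suc m := d)) j = 2" for i j
  proof (cases "j = Suc m")
    case True
    with that have "c i = 2" "d = 2" by (auto split: if_splits)
    then obtain k where "i < k" "k \<le> m" "c k = 0"
      using open_if_2 unfolding cg_seqs_open_def by blast
    with True show ?thesis by (intro exI[of _ k]) simp
  next
    case False
    with that have "c j = 2" by simp
    with cg_seqs_above[OF c] have "j \<le> m" by (metis not_le zero_neq_numeral)
    with that have "c i = 2" by (auto split: if_splits)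
    then obtain k where "i < k" "k < j" "c k = 0"
      using cg_valid_gap[OF v \<open>i < j\<close> \<open>c i = 2\<close> \<open>c j = 2\<close>] by blast
    with \<open>j \<le> m\<close> show ?thesis by (intro exI[of _ k]) simp
  qed
  have "cg_valid (c(Suc m := d))"
  proof (rule cg_validI)
    show "finite {i. (c(Suc m := d)) i \<noteq> 0}"
      by (rule finite_subset[of _ "insert (Suc m) {i. c i \<noteq> 0}"])
        (use v in \<open>auto simp: cg_valid_def\<close>)
    show "(c(Suc m := d)) i \<le> 2" for i
      using v \<open>d \<le> 2\<close> by (simp add: cg_valid_def)
  qed (use v gap in \<open>simp_all add: cg_valid_def\<close>)
  moreover have "a \<le> i \<and> i \<le> Suc m" if "(c(Suc m := d)) i \<noteq> 0" for i
    using that cg_seqs_support[OF c, of i] \<open>a \<le> Suc m\<close> by (cases "i = Suc m") auto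
  ultimately show ?thesis by (simp add: cg_seqs_def)
qed

lemma cg_seqs_open_fun_upd_1:
  assumes "c \<in> cg_seqs_open a m" and "a \<le> Suc m"
  shows "c(Suc m := 1) \<in> cg_seqs_open a (Suc m)"
proof -
  have "c(Suc m := 1) \<in> cg_seqs a (Suc m)"
    using assms cg_seqs_open_subset by (intro cg_seqs_fun_upd) auto
  moreover have "\<exists>k. i < k \<and> k \<le> Suc m \<and> (c(Suc m := 1)) k = 0"
    if "(c(Suc m := 1)) i = 2" for i
  proof -
    have "c i = 2" using that by (auto split: if_splits)
    then obtain k where "i < k" "k \<le> m" "c k = 0"
      using assms(1) unfolding cg_seqs_open_def by blast
    then show ?thesis by (intro exI[of _ k]) simp
  qed
  ultimately show ?thesis unfolding cg_seqs_open_def by blast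
qed

lemma cg_seqs_subset_open_Suc: "cg_seqs a m \<subseteq> cg_seqs_open a (Suc m)"
proof
  fix c assume c: "c \<in> cg_seqs a m"
  then have "c \<in> cg_seqs a (Suc m)" by (auto simp: cg_seqs_def le_Suc_eq)
  moreover have "\<exists>k. i < k \<and> k \<le> Suc m \<and> c k = 0" if "c i = 2" for i
  proof -
    have "i \<le> m" "c (Suc m) = 0"
      using that cg_seqs_support[OF c, of i] cg_seqs_above[OF c, of "Suc m"] by auto
    then show ?thesis by (intro exI[of _ "Suc m"]) simp
  qed
  ultimately show "c \<in> cg_seqs_open a (Suc m)" unfolding cg_seqs_open_def by blast
qed

lemma cg_seqs_empty_range: "m < a \<Longrightarrow> cg_seqs a m = {\<lambda>_. 0}"
proof -
  assume "m < a"
  then have "c = (\<lambda>_. 0)" if "c \<in> cg_seqs a m" for c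
    using cg_seqs_support[OF that] by fastforce
  moreover have "(\<lambda>_. 0) \<in> cg_seqs a m" by (simp add: cg_seqs_def cg_valid_def)
  ultimately show ?thesis by blast
qed

lemma cg_seqs_open_empty_range: "m < a \<Longrightarrow> cg_seqs_open a m = {\<lambda>_. 0}"
  using cg_seqs_empty_range[of m a] by (auto simp: cg_seqs_open_def)

lemma cg_seqs_Suc:
  assumes "a \<le> Suc m"
  shows "cg_seqs a (Suc m) = cg_seqs a m \<union> (\<lambda>c. c(Suc m := 1)) ` cg_seqs a m
           \<union> (\<lambda>c. c(Suc m := 2)) ` cg_seqs_open a m" (is "_ = ?G \<union> ?U1 \<union> ?U2")
proof (intro equalityI subsetI)
  fix c assume c: "c \<in> cg_seqs a (Suc m)"
  have "c (Suc m) \<le> 2" using cg_seqs_le_2[OF c] .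
  then consider "c (Suc m) = 0" | "c (Suc m) = 1" | "c (Suc m) = 2" by linarith
  then show "c \<in> ?G \<union> ?U1 \<union> ?U2"
  proof cases
    case 1
    then have "c \<in> ?G" using cg_seqs_fun_upd_0[OF c] by (simp add: fun_upd_idem)
    then show ?thesis by blast
  next
    case 2
    have "c \<in> ?U1"
      by (rule rev_image_eqI[OF cg_seqs_fun_upd_0[OF c]]) (use 2 in \<open>simp add: fun_upd_idem\<close>)
    then show ?thesis by blast
  next
    case 3
    have "c \<in> ?U2"
      by (rule rev_image_eqI[OF cg_seqs_open_fun_upd_0_of_2[OF c 3]])
        (use 3 in \<open>simp add: fun_upd_idem\<close>)
    then show ?thesis by blast
  qed
next
  fix c assume "c \<in> ?G \<union> ?U1 \<union> ?U2"
  then consider "c \<in> ?G" | c' where "c' \<in> ?G" "c = c'(Suc m := 1)"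
    | c' where "c' \<in> cg_seqs_open a m" "c = c'(Suc m := 2)" by blast
  then show "c \<in> cg_seqs a (Suc m)"
  proof cases
    case 1
    then show ?thesis using cg_seqs_subset_open_Suc cg_seqs_open_subset by blast
  next
    case 2
    then show ?thesis using cg_seqs_fun_upd[OF _ assms, of c' 1] by simp
  next
    case 3
    then show ?thesis using cg_seqs_fun_upd[OF _ assms, of c' 2] cg_seqs_open_subset by blast
  qed
qed

lemma cg_seqs_open_Suc:
  assumes "a \<le> Suc m"
  shows "cg_seqs_open a (Suc m) = cg_seqs a m \<union> (\<lambda>c. c(Suc m := 1)) ` cg_seqs_open a m"
    (is "_ = ?G \<union> ?U1")
proof (intro equalityI subsetI)
  fix c assume c: "c \<in> cg_seqs_open a (Suc m)"
  then have c': "c \<in> cg_seqs a (Suc m)" using cg_seqs_open_subset by blast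
  have "c (Suc m) \<noteq> 2" using c unfolding cg_seqs_open_def by force
  with cg_seqs_le_2[OF c', of "Suc m"] consider "c (Suc m) = 0" | "c (Suc m) = 1" by linarith
  then show "c \<in> ?G \<union> ?U1"
  proof cases
    case 1
    then have "c \<in> ?G" using cg_seqs_fun_upd_0[OF c'] by (simp add: fun_upd_idem)
    then show ?thesis by blast
  next
    case 2
    have "c \<in> ?U1"
      by (rule rev_image_eqI[OF cg_seqs_open_fun_upd_0_of_1[OF c 2]])
        (use 2 in \<open>simp add: fun_upd_idem\<close>)
    then show ?thesis by blast
  qed
next
  fix c assume "c \<in> ?G \<union> ?U1"
  then show "c \<in> cg_seqs_open a (Suc m)"
    using cg_seqs_subset_open_Suc cg_seqs_open_fun_upd_1[OF _ assms] by blast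
qed

lemma inj_on_fun_upd_cg_seqs: "inj_on (\<lambda>c. c(Suc m := d)) (cg_seqs a m)"
proof (rule inj_onI)
  fix c c' assume "c \<in> cg_seqs a m" "c' \<in> cg_seqs a m" and eq: "c(Suc m := d) = c'(Suc m := d)"
  then have "c (Suc m) = 0" "c' (Suc m) = 0" using cg_seqs_above by blast+
  then show "c = c'" using fun_cong[OF eq] by (intro ext) (metis fun_upd_other)
qed

lemma card_image_fun_upd_cg_seqs:
  "S \<subseteq> cg_seqs a m \<Longrightarrow> card ((\<lambda>c. c(Suc m := d)) ` S) = card S"
  using card_image[OF inj_on_subset[OF inj_on_fun_upd_cg_seqs]] .

lemma fib_even_Suc: "fib (2 * Suc j + 2) = 2 * fib (2 * j + 2) + fib (2 * j + 1)"
  by (simp add: numeral_eq_Suc)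

lemma fib_odd_Suc: "fib (2 * Suc j + 1) = fib (2 * j + 2) + fib (2 * j + 1)"
  by (simp add: numeral_eq_Suc)

lemma finite_card_cg_seqs:
  "finite (cg_seqs (Suc a) (a + j)) \<and> card (cg_seqs (Suc a) (a + j)) = fib (2 * j + 2) \<and>
   finite (cg_seqs_open (Suc a) (a + j)) \<and> card (cg_seqs_open (Suc a) (a + j)) = fib (2 * j + 1)"
proof (induction j)
  case 0
  then show ?case by (simp add: cg_seqs_empty_range cg_seqs_open_empty_range)
next
  case (Suc j)
  define m where "m = a + j"
  let ?G = "cg_seqs (Suc a) m" and ?R = "cg_seqs_open (Suc a) m"
  let ?upd = "\<lambda>d c. c(Suc m := d)"
  have le: "Suc a \<le> Suc m" by (simp add: m_def)
  have fin: "finite ?G" "finite ?R" and card: "card ?G = fib (2 * j + 2)" "card ?R = fib (2 * j + 1)"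
    using Suc.IH by (simp_all add: m_def)
  have zero: "c (Suc m) = 0" if "c \<in> ?G" for c using cg_seqs_above[OF that] by simp
  have R_G: "?R \<subseteq> ?G" by (rule cg_seqs_open_subset)
  have upd_at: "c (Suc m) = d" if "c \<in> ?upd d ` S" for c d S using that by auto
  have not_2: "c (Suc m) \<noteq> 2" if "c \<in> ?G \<union> ?upd 1 ` ?G" for c
  proof -
    have "c (Suc m) = 0 \<or> c (Suc m) = 1" using that by (metis Un_iff upd_at zero)
    then show ?thesis by auto
  qed
  have disj: "?G \<inter> ?upd 1 ` S = {}" "(?G \<union> ?upd 1 ` ?G) \<inter> ?upd 2 ` ?R = {}" for S
    by (metis disjoint_iff upd_at zero zero_neq_one) (metis disjoint_iff upd_at not_2)
  have "card (cg_seqs (Suc a) (Suc m)) = card ?G + card (?upd 1 ` ?G) + card (?upd 2 ` ?R)"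
    unfolding cg_seqs_Suc[OF le] using fin disj by (simp add: card_Un_disjoint)
  also have "\<dots> = fib (2 * Suc j + 2)"
    using card card_image_fun_upd_cg_seqs[OF order_refl] card_image_fun_upd_cg_seqs[OF R_G]
    by (simp add: fib_even_Suc)
  finally have G: "card (cg_seqs (Suc a) (Suc m)) = fib (2 * Suc j + 2)" .
  have "card (cg_seqs_open (Suc a) (Suc m)) = card ?G + card (?upd 1 ` ?R)"
    unfolding cg_seqs_open_Suc[OF le] using fin disj by (simp add: card_Un_disjoint)
  also have "\<dots> = fib (2 * Suc j + 1)"
    using card card_image_fun_upd_cg_seqs[OF R_G] by (simp add: fib_odd_Suc)
  finally have R: "card (cg_seqs_open (Suc a) (Suc m)) = fib (2 * Suc j + 1)" .
  show ?case
    using G R fin cg_seqs_Suc[OF le] cg_seqs_open_Suc[OF le] by (simp add: m_def)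
qed

lemma cg_seqs_0: "cg_seqs a 0 = {\<lambda>_. 0}"
proof -
  have "c = (\<lambda>_. 0)" if c: "c \<in> cg_seqs a 0" for c
  proof
    fix i
    show "c i = 0"
      using cg_seqs_support[OF c, of i] cg_seqs_valid[OF c] by (cases "i = 0") (auto simp: cg_valid_def)
  qed
  moreover have "(\<lambda>_. 0) \<in> cg_seqs a 0" by (simp add: cg_seqs_def cg_valid_def)
  ultimately show ?thesis by blast
qed

lemma cg_val_eq_sum_atMost:
  assumes "\<And>i. c i \<noteq> 0 \<Longrightarrow> i \<le> m"
  shows "cg_val c = (\<Sum>i\<le>m. c i * fib (2 * i))"
  unfolding cg_val_def by (rule sum.mono_neutral_left) (use assms in auto)

lemma cg_val_fun_upd:
  assumes c: "c \<in> cg_seqs a m"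
  shows "cg_val (c(Suc m := d)) = cg_val c + d * fib (2 * Suc m)"
proof -
  have "i \<le> Suc m" if "(c(Suc m := d)) i \<noteq> 0" for i
    using that cg_seqs_support[OF c, of i] by (cases "i = Suc m") auto
  then have "cg_val (c(Suc m := d)) = (\<Sum>i\<le>Suc m. (c(Suc m := d)) i * fib (2 * i))"
    by (rule cg_val_eq_sum_atMost)
  also have "\<dots> = (\<Sum>i\<le>m. c i * fib (2 * i)) + d * fib (2 * Suc m)"
    by (simp add: sum.atMost_Suc)
  also have "(\<Sum>i\<le>m. c i * fib (2 * i)) = cg_val c"
    by (rule cg_val_eq_sum_atMost[symmetric]) (use cg_seqs_support[OF c] in blast)
  finally show ?thesis .
qed

lemma cg_val_split_last:
  assumes "c \<in> cg_seqs a (Suc m)"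
  shows "cg_val c = cg_val (c(Suc m := 0)) + c (Suc m) * fib (2 * Suc m)"
  using cg_val_fun_upd[OF cg_seqs_fun_upd_0[OF assms], of "c (Suc m)"] by simp

lemma cg_val_bounds:
  "(\<forall>c\<in>cg_seqs a m. cg_val c < fib (2 * m + 2)) \<and>
   (\<forall>c\<in>cg_seqs_open a m. cg_val c < fib (2 * m + 1))"
proof (induction m)
  case 0
  then show ?case
    using cg_seqs_open_subset[of a 0] by (auto simp: cg_seqs_0 cg_val_def)
next
  case (Suc m)
  let ?F = "fib (2 * m + 2)"
  have G_bound: "cg_val (c(Suc m := 0)) < ?F" if "c \<in> cg_seqs a (Suc m)" for c
    using Suc.IH cg_seqs_fun_upd_0[OF that] by blast
  have R_bound: "cg_val (c(Suc m := 0)) < fib (2 * m + 1)"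
    if "c \<in> cg_seqs a (Suc m)" "c (Suc m) = 2 \<or> c \<in> cg_seqs_open a (Suc m) \<and> c (Suc m) = 1" for c
    using that Suc.IH cg_seqs_open_fun_upd_0_of_2 cg_seqs_open_fun_upd_0_of_1 by blast
  have split: "cg_val c = cg_val (c(Suc m := 0)) + c (Suc m) * ?F" if "c \<in> cg_seqs a (Suc m)" for c
    using cg_val_split_last[OF that] by simp
  have "cg_val c < fib (2 * Suc m + 2)" if c: "c \<in> cg_seqs a (Suc m)" for c
  proof -
    have "c (Suc m) \<le> 2" using cg_seqs_le_2[OF c] .
    then consider "c (Suc m) \<le> 1" | "c (Suc m) = 2" by linarith
    then show ?thesis
    proof cases
      case 1
      then have "c (Suc m) * ?F \<le> ?F" by simp
      then show ?thesis using split[OF c] G_bound[OF c] fib_even_Suc[of m] by linarith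
    next
      case 2
      then show ?thesis using split[OF c] R_bound[OF c] fib_even_Suc[of m] by simp
    qed
  qed
  moreover have "cg_val c < fib (2 * Suc m + 1)" if c: "c \<in> cg_seqs_open a (Suc m)" for c
  proof -
    have c': "c \<in> cg_seqs a (Suc m)" using c cg_seqs_open_subset by blast
    have "c (Suc m) \<noteq> 2" using c unfolding cg_seqs_open_def by force
    with cg_seqs_le_2[OF c', of "Suc m"] consider "c (Suc m) = 0" | "c (Suc m) = 1" by linarith
    then show ?thesis
    proof cases
      case 1
      then show ?thesis using split[OF c'] G_bound[OF c'] fib_odd_Suc[of m] by simp
    next
      case 2
      then show ?thesis using split[OF c'] R_bound[OF c'] c fib_odd_Suc[of m] by simp
    qed
  qed
  ultimately show ?case by blast
qed

lemma inj_on_cg_val_cg_seqs: "inj_on cg_val (cg_seqs a m)"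
proof (induction m)
  case 0
  then show ?case by (simp add: cg_seqs_0)
next
  case (Suc m)
  let ?F = "fib (2 * Suc m)"
  have digits: "c (Suc m) = cg_val c div ?F \<and> cg_val (c(Suc m := 0)) = cg_val c mod ?F"
    if c: "c \<in> cg_seqs a (Suc m)" for c
  proof -
    have digit_split: "(x + y * F) div F = y \<and> (x + y * F) mod F = x" if "x < F" for x y F :: nat
      using that by simp
    have "cg_val (c(Suc m := 0)) < ?F"
      using cg_val_bounds[of a m] cg_seqs_fun_upd_0[OF c] by simp
    from digit_split[OF this, of "c (Suc m)"] show ?thesis
      unfolding cg_val_split_last[OF c] by simp
  qed
  show ?case
  proof (rule inj_onI)
    fix c c' assume c: "c \<in> cg_seqs a (Suc m)" and c': "c' \<in> cg_seqs a (Suc m)"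
      and eq: "cg_val c = cg_val c'"
    have "c(Suc m := 0) = c'(Suc m := 0)"
      using inj_onD[OF Suc.IH] digits[OF c] digits[OF c'] eq cg_seqs_fun_upd_0 c c' by metis
    moreover have "c (Suc m) = c' (Suc m)" using digits[OF c] digits[OF c'] eq by simp
    ultimately show "c = c'" by (metis fun_upd_triv fun_upd_upd)
  qed
qed

lemma less_fib_double_Suc: "n < fib (2 * n + 2)"
  by (induction n) (auto simp add: fib_even_Suc fib_neq_0_nat)

lemma cg_val_image_cg_seqs: "cg_val ` cg_seqs 1 m = {..<fib (2 * m + 2)}"
proof (rule card_subset_eq)
  show "cg_val ` cg_seqs 1 m \<subseteq> {..<fib (2 * m + 2)}" using cg_val_bounds[of 1 m] by auto
  show "card (cg_val ` cg_seqs 1 m) = card {..<fib (2 * m + 2)}"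
    using card_image[OF inj_on_cg_val_cg_seqs] finite_card_cg_seqs[of 0 m] by simp
qed simp

lemma cg_representation_exists: "\<exists>c. cg_valid c \<and> cg_val c = n"
  using cg_val_image_cg_seqs[of n] less_fib_double_Suc[of n] cg_seqs_valid
  by (metis imageE lessThan_iff)

lemma cg_valid_in_cg_seqs:
  assumes "cg_valid c"
  obtains m where "\<And>m'. m \<le> m' \<Longrightarrow> c \<in> cg_seqs 1 m'"
proof
  let ?m = "Max {i. c i \<noteq> 0}"
  have fin: "finite {i. c i \<noteq> 0}" and "c 0 = 0" using assms by (simp_all add: cg_valid_def)
  fix m' assume "?m \<le> m'"
  then have "1 \<le> i \<and> i \<le> m'" if "c i \<noteq> 0" for i
    using that \<open>c 0 = 0\<close> Max_ge[OF fin, of i] by (cases i) auto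
  with assms show "c \<in> cg_seqs 1 m'" by (simp add: cg_seqs_def)
qed

lemma inj_on_cg_val: "inj_on cg_val {c. cg_valid c}"
proof (rule inj_onI)
  fix c c' assume "c \<in> {c. cg_valid c}" "c' \<in> {c. cg_valid c}" and eq: "cg_val c = cg_val c'"
  then obtain m m' where "\<And>n. m \<le> n \<Longrightarrow> c \<in> cg_seqs 1 n" "\<And>n. m' \<le> n \<Longrightarrow> c' \<in> cg_seqs 1 n"
    using cg_valid_in_cg_seqs by (metis mem_Collect_eq)
  then have "c \<in> cg_seqs 1 (max m m')" "c' \<in> cg_seqs 1 (max m m')" by simp_all
  with eq show "c = c'" using inj_on_cg_val_cg_seqs by (metis inj_onD)
qed

lemma cg_coeffs_cg_val: "cg_valid c \<Longrightarrow> cg_coeffs (cg_val c) = c"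
  unfolding cg_coeffs_def by (rule the_equality) (use inj_on_cg_val in \<open>auto dest: inj_onD\<close>)

lemma cg_valid_cg_coeffs: "cg_valid (cg_coeffs n)"
  and cg_val_cg_coeffs: "cg_val (cg_coeffs n) = n"
  using cg_representation_exists[of n] cg_coeffs_cg_val by auto

lemma strict_mono_fib_double: "strict_mono (\<lambda>i. fib (2 * i))"
  unfolding strict_mono_Suc_iff by (simp add: numeral_eq_Suc fib_neq_0_nat)

lemma strict_mono_Min_Max_image_iff:
  fixes f :: "'a::linorder \<Rightarrow> 'b::linorder"
  assumes f: "strict_mono f" and I: "finite I" and "J \<subseteq> I"
  shows "(J \<noteq> {} \<and> Min (f ` I) = f k \<and> Max (f ` I) = Max (f ` J) \<and> Max (f ` J) = f t)
     \<longleftrightarrow> I \<subseteq> {k..t} \<and> k \<in> I \<and> t \<in> J"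
proof (cases "J = {}")
  case False
  with \<open>J \<subseteq> I\<close> I have "I \<noteq> {}" "finite J" using finite_subset by blast+
  then have commute: "Min (f ` I) = f (Min I)" "Max (f ` I) = f (Max I)" "Max (f ` J) = f (Max J)"
    using mono_Min_commute mono_Max_commute strict_mono_mono[OF f] I False by metis+
  have "(J \<noteq> {} \<and> Min (f ` I) = f k \<and> Max (f ` I) = Max (f ` J) \<and> Max (f ` J) = f t)
      \<longleftrightarrow> Min I = k \<and> Max I = t \<and> Max J = t"
    using False commute strict_mono_eq[OF f] by auto
  also have "\<dots> \<longleftrightarrow> I \<subseteq> {k..t} \<and> k \<in> I \<and> t \<in> J"
  proof
    assume "Min I = k \<and> Max I = t \<and> Max J = t"
    then show "I \<subseteq> {k..t} \<and> k \<in> I \<and> t \<in> J"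
      using I \<open>I \<noteq> {}\<close> Min_in[OF I \<open>I \<noteq> {}\<close>] Max_in[OF \<open>finite J\<close> False]
        Min_le[OF I] Max_ge[OF I] by auto
  next
    assume *: "I \<subseteq> {k..t} \<and> k \<in> I \<and> t \<in> J"
    have "Min I = k" by (rule Min_eqI[OF I]) (use * in auto)
    moreover have "Max I = t" by (rule Max_eqI[OF I]) (use * \<open>J \<subseteq> I\<close> in auto)
    moreover have "Max J = t" by (rule Max_eqI[OF \<open>finite J\<close>]) (use * \<open>J \<subseteq> I\<close> in auto)
    ultimately show "Min I = k \<and> Max I = t \<and> Max J = t" by blast
  qed
  finally show ?thesis .
qed simp

lemma fib_double_image_coeffs:
  assumes "\<not> P 0"
  shows "{fib (2 * i) |i. 1 \<le> i \<and> P (cg_coeffs n i)} = (\<lambda>i. fib (2 * i)) ` {i. P (cg_coeffs n i)}"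
proof -
  have "cg_coeffs n 0 = 0" using cg_valid_cg_coeffs[of n] by (simp add: cg_valid_def)
  with assms have "{i. 1 \<le> i \<and> P (cg_coeffs n i)} = {i. P (cg_coeffs n i)}"
    by (auto simp: Suc_le_eq intro: gr0I)
  then show ?thesis by blast
qed

lemma cg_val_pos: "cg_valid c \<Longrightarrow> c k \<noteq> 0 \<Longrightarrow> 0 < cg_val c"
proof -
  assume c: "cg_valid c" and "c k \<noteq> 0"
  then have "k \<noteq> 0" by (cases k) (simp_all add: cg_valid_def)
  have "c k * fib (2 * k) \<le> cg_val c"
    unfolding cg_val_def by (rule member_le_sum) (use c \<open>c k \<noteq> 0\<close> in \<open>auto simp: cg_valid_def\<close>)
  moreover have "0 < c k * fib (2 * k)" using \<open>c k \<noteq> 0\<close> \<open>k \<noteq> 0\<close> by (simp add: fib_neq_0_nat)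
  ultimately show ?thesis by linarith
qed

lemma A_max_coeff_eq_cg_val_image:
  assumes "d \<noteq> 0"
  shows "{n \<in> A k. (\<lambda>i. fib (2 * i)) ` {i. cg_coeffs n i = d} \<noteq> {} \<and>
            Max (CG n) = Max ((\<lambda>i. fib (2 * i)) ` {i. cg_coeffs n i = d}) \<and>
            Max ((\<lambda>i. fib (2 * i)) ` {i. cg_coeffs n i = d}) = fib (2 * k + 2 * l)}
       = cg_val ` {c \<in> cg_seqs k (k + l). c k \<noteq> 0 \<and> c (k + l) = d}" (is "?L = cg_val ` ?T")
proof -
  let ?f = "\<lambda>i. fib (2 * i)"
  have mem_iff: "n \<in> ?L \<longleftrightarrow> cg_coeffs n \<in> ?T" for n
  proof -
    define c where "c = cg_coeffs n"
    have valid: "cg_valid c" and n: "n = cg_val c"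
      unfolding c_def by (simp_all add: cg_valid_cg_coeffs cg_val_cg_coeffs)
    let ?I = "{i. c i \<noteq> 0}" and ?J = "{i. c i = d}"
    have CG: "CG n = ?f ` ?I"
      unfolding CG_def c_def using fib_double_image_coeffs[of "\<lambda>x. x \<noteq> 0" n] by simp
    have "finite ?I" using valid by (simp add: cg_valid_def)
    moreover have "?J \<subseteq> ?I" using assms by auto
    ultimately have "(?J \<noteq> {} \<and> Min (?f ` ?I) = ?f k \<and> Max (?f ` ?I) = Max (?f ` ?J) \<and>
        Max (?f ` ?J) = ?f (k + l)) \<longleftrightarrow> ?I \<subseteq> {k..k + l} \<and> k \<in> ?I \<and> k + l \<in> ?J"
      by (rule strict_mono_Min_Max_image_iff[OF strict_mono_fib_double])
    moreover have "n \<in> ?L \<longleftrightarrow> 1 \<le> n \<and> (?J \<noteq> {} \<and> Min (?f ` ?I) = ?f k \<and>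
        Max (?f ` ?I) = Max (?f ` ?J) \<and> Max (?f ` ?J) = ?f (k + l))"
      unfolding A_def mem_Collect_eq CG c_def[symmetric] by (simp add: distrib_left; blast)
    moreover have "?I \<subseteq> {k..k + l} \<and> k \<in> ?I \<and> k + l \<in> ?J \<longleftrightarrow> c \<in> ?T"
      using valid by (simp add: cg_seqs_def subset_iff)
    moreover have "k \<in> ?I \<Longrightarrow> 1 \<le> n" using cg_val_pos[OF valid] n by fastforce
    ultimately show ?thesis unfolding c_def[symmetric] by argo
  qed
  show ?thesis
  proof (intro equalityI subsetI)
    fix n assume "n \<in> ?L"
    then have "cg_coeffs n \<in> ?T" using mem_iff by blast
    then show "n \<in> cg_val ` ?T" by (rule rev_image_eqI) (simp add: cg_val_cg_coeffs)
  next
    fix n assume "n \<in> cg_val ` ?T"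
    then obtain c where c: "c \<in> ?T" and n: "n = cg_val c" by blast
    then have "cg_coeffs n = c" using cg_coeffs_cg_val cg_seqs_valid by blast
    with c show "n \<in> ?L" using mem_iff by simp
  qed
qed

lemma cg_seqs_last_eq_1:
  assumes "a \<le> Suc m"
  shows "{c \<in> cg_seqs a (Suc m). c (Suc m) = 1} = (\<lambda>c. c(Suc m := 1)) ` cg_seqs a m"
proof -
  have "c (Suc m) = 0" if "c \<in> cg_seqs a m" for c using cg_seqs_above[OF that] by simp
  then show ?thesis
    unfolding cg_seqs_Suc[OF assms] using cg_seqs_open_subset by fastforce
qed

lemma cg_seqs_last_eq_2:
  assumes "a \<le> Suc m"
  shows "{c \<in> cg_seqs a (Suc m). c (Suc m) = 2} = (\<lambda>c. c(Suc m := 2)) ` cg_seqs_open a m"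
proof -
  have "c (Suc m) = 0" if "c \<in> cg_seqs a m" for c using cg_seqs_above[OF that] by simp
  then show ?thesis
    unfolding cg_seqs_Suc[OF assms] by fastforce
qed

lemma cg_seqs_first_eq_0: "{c \<in> cg_seqs a m. c a = 0} = cg_seqs (Suc a) m"
proof -
  have "Suc a \<le> i \<longleftrightarrow> a \<le> i \<and> i \<noteq> a" for i by auto
  then show ?thesis unfolding cg_seqs_def by (auto simp: Suc_le_eq)
qed

lemma card_cg_seqs_first_last:
  assumes "1 \<le> k" "1 \<le> l"
  shows "card {c \<in> cg_seqs k (k + l). c k \<noteq> 0 \<and> c (k + l) = 1} = fib (2 * l + 1)"
    and "card {c \<in> cg_seqs k (k + l). c k \<noteq> 0 \<and> c (k + l) = 2} = fib (2 * l)"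
proof -
  obtain b j where k: "k = Suc b" and l: "l = Suc j" using assms by (metis Suc_le_D One_nat_def)
  define m where "m = k + j"
  have km: "k + l = Suc m" "k \<le> Suc m" "Suc k \<le> Suc m" by (simp_all add: m_def l)
  let ?last = "\<lambda>a d. {c \<in> cg_seqs a (Suc m). c (Suc m) = d}"
  have card_diff: "card {c \<in> cg_seqs k (Suc m). c k \<noteq> 0 \<and> c (Suc m) = d}
      = card (?last k d) - card (?last (Suc k) d)" if "finite (?last (Suc k) d)" for d
  proof -
    have first_0: "c \<in> cg_seqs (Suc k) (Suc m) \<longleftrightarrow> c \<in> cg_seqs k (Suc m) \<and> c k = 0" for c
      using cg_seqs_first_eq_0[of k "Suc m"] by blast
    have "{c \<in> cg_seqs k (Suc m). c k \<noteq> 0 \<and> c (Suc m) = d} = ?last k d - ?last (Suc k) d"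
      and "?last (Suc k) d \<subseteq> ?last k d"
      by (auto simp: first_0)
    then show ?thesis using card_Diff_subset[OF that] by simp
  qed
  have fin: "finite (cg_seqs (Suc k) m)" "finite (cg_seqs_open (Suc k) m)"
    and card_k: "card (cg_seqs k m) = fib (2 * l + 2)" "card (cg_seqs_open k m) = fib (2 * l + 1)"
    and card_Suc_k: "card (cg_seqs (Suc k) m) = fib (2 * j + 2)"
      "card (cg_seqs_open (Suc k) m) = fib (2 * j + 1)"
    using finite_card_cg_seqs[of k j] finite_card_cg_seqs[of b l] by (simp_all add: m_def k l)
  have "fib (2 * l + 2) - fib (2 * j + 2) = fib (2 * l + 1)"
    unfolding l fib_even_Suc fib_odd_Suc by simp
  then show "card {c \<in> cg_seqs k (k + l). c k \<noteq> 0 \<and> c (k + l) = 1} = fib (2 * l + 1)"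
    using card_diff[of 1] fin card_k card_Suc_k
      card_image_fun_upd_cg_seqs[of "cg_seqs k m" k m 1]
      card_image_fun_upd_cg_seqs[of "cg_seqs (Suc k) m" "Suc k" m 1]
    unfolding km(1) cg_seqs_last_eq_1[OF km(2)] cg_seqs_last_eq_1[OF km(3)] by simp
  have "fib (2 * l + 1) - fib (2 * j + 1) = fib (2 * l)"
    unfolding l fib_odd_Suc by (simp add: numeral_eq_Suc)
  then show "card {c \<in> cg_seqs k (k + l). c k \<noteq> 0 \<and> c (k + l) = 2} = fib (2 * l)"
    using card_diff[of 2] fin card_k card_Suc_k cg_seqs_open_subset
      card_image_fun_upd_cg_seqs[of "cg_seqs_open k m" k m 2]
      card_image_fun_upd_cg_seqs[of "cg_seqs_open (Suc k) m" "Suc k" m 2]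
    unfolding km(1) cg_seqs_last_eq_2[OF km(2)] cg_seqs_last_eq_2[OF km(3)] by simp
qed

theorem corollary3p4:
  fixes k l :: nat
  assumes "k \<ge> 1" and "l \<ge> 1"
  shows "card {n \<in> A k. CG1 n \<noteq> {} \<and> Max (CG n) = Max (CG1 n) \<and>
                        Max (CG1 n) = fib (2 * k + 2 * l)} = fib (2 * l + 1)
       \<and> card {n \<in> A k. CG2 n \<noteq> {} \<and> Max (CG n) = Max (CG2 n) \<and>
                        Max (CG2 n) = fib (2 * k + 2 * l)} = fib (2 * l)"
proof -
  have CG_d: "{fib (2 * i) |i. 1 \<le> i \<and> cg_coeffs n i = d} = (\<lambda>i. fib (2 * i)) ` {i. cg_coeffs n i = d}"
    if "d \<noteq> 0" for n d
    using fib_double_image_coeffs[of "\<lambda>x. x = d" n] that by simp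
  have card_image_cg_val: "card (cg_val ` {c \<in> cg_seqs a m. P c}) = card {c \<in> cg_seqs a m. P c}"
    for a m P
    by (rule card_image, rule inj_on_subset[OF inj_on_cg_val]) (auto dest: cg_seqs_valid)
  have two: "(2::nat) \<noteq> 0" by simp
  show ?thesis
    unfolding CG1_def CG2_def CG_d[OF one_neq_zero] CG_d[OF two]
      A_max_coeff_eq_cg_val_image[OF one_neq_zero] A_max_coeff_eq_cg_val_image[OF two]
    using card_cg_seqs_first_last[OF assms] card_image_cg_val by simp
qed

end
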